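(* Let $n\ge3$ and $0\le k\le n-2$ be integers. Then the polynomial $a_{n,k}$ has total degree exactly $2+k$.
   Context: Let $T_1,T_2,\dots$ be indeterminates. Define linear operators $L,H$ on monomials (constants sent to $0$): $L(T_{\alpha_1}\cdots T_{\alpha_r})=\sum_{1\le i<j\le r}T_{\alpha_1}\cdots T_{\alpha_i+1}\cdots T_{\alpha_j+1}\cdots T_{\alpha_r}$, $H(T_{\alpha_1}\cdots T_{\alpha_r})=-\frac12\sum_{k=1}^{r}\sum_{l=1}^{\alpha_k-1}\binom{\alpha_k}{l}T_{1+l}T_{1+\alpha_k-l}\prod_{i\ne k}T_{\alpha_i}$. For $n\ge2$ let $A_n=-\sum_{k=1}^{n-1}\binom{n}{k}T_{1+k}T_{1+n-k}T_n$; set $R_2=0$, $R_{n+1}=A_n+L(R_n)+H(R_n)$. For $0\le k\le n-2$, $a_{n,k}$ denotes the polynomial obtained by taking all monomials of $R_{n+1}$ (with their coefficients) whose largest variable index is $n-k$ and dividing them by $T_{n-k}$, so that $R_{n+1}=\sum_{k=0}^{n-2}a_{n,k}T_{n-k}$. *)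

theory Defs
  imports Complex_Main "HOL-Library.Multiset" "HOL-Library.Poly_Mapping"
begin

text \<open>A monomial T_{a_1}...T_{a_r} is the multiset of its indices {#a_1,...,a_r#};
  a polynomial is a finitely supported map from monomials to coefficients.\<close>

type_synonym monom = "nat multiset"
type_synonym tpoly = "monom \<Rightarrow>\<^sub>0 rat"

definition L_mon :: "rat \<Rightarrow> nat list \<Rightarrow> tpoly" where
  "L_mon c xs = (\<Sum>i<length xs. \<Sum>j\<in>{i<..<length xs}.
      Poly_Mapping.single (mset (xs[i := xs!i + 1, j := xs!j + 1])) c)"

definition H_mon :: "rat \<Rightarrow> nat list \<Rightarrow> tpoly" where
  "H_mon c xs = (\<Sum>k<length xs. \<Sum>l\<in>{1..<xs!k}.
      Poly_Mapping.single (mset xs - {#xs!k#} + {#1 + l, 1 + xs!k - l#})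
        (- (1/2) * of_nat (xs!k choose l) * c))"

definition lin_ext :: "(rat \<Rightarrow> nat list \<Rightarrow> tpoly) \<Rightarrow> tpoly \<Rightarrow> tpoly" where
  "lin_ext f p = (\<Sum>m\<in>Poly_Mapping.keys p. f (Poly_Mapping.lookup p m) (sorted_list_of_multiset m))"

definition Lop :: "tpoly \<Rightarrow> tpoly" where "Lop = lin_ext L_mon"
definition Hop :: "tpoly \<Rightarrow> tpoly" where "Hop = lin_ext H_mon"

definition A_pol :: "nat \<Rightarrow> tpoly" where
  "A_pol n = (\<Sum>k\<in>{1..n-1}. Poly_Mapping.single {#1 + k, 1 + n - k, n#} (- of_nat (n choose k)))"

text \<open>R 2 = 0 and R (n+1) = A n + L (R n) + H (R n) for n \<ge> 2; values below 2 are irrelevant.\<close>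
fun R :: "nat \<Rightarrow> tpoly" where
  "R 0 = 0"
| "R (Suc n) = (if n < 2 then 0 else A_pol n + Lop (R n) + Hop (R n))"

definition a_coef :: "nat \<Rightarrow> nat \<Rightarrow> tpoly" where
  "a_coef n k = (\<Sum>m\<in>{m\<in>Poly_Mapping.keys (R (n+1)). n - k \<in># m \<and> (\<forall>x\<in>#m. x \<le> n - k)}.
      Poly_Mapping.single (m - {#n - k#}) (Poly_Mapping.lookup (R (n+1)) m))"

definition total_degree :: "tpoly \<Rightarrow> nat" where
  "total_degree p = Max (insert 0 (size ` Poly_Mapping.keys p))"

end

theory Submission
  imports Defs
begin

text \<open>Two invariants of the recursion make the degree of a_{n,k} computable.
  Every monomial T_{x_1}\<dots>T_{x_r} of R_{n+1} satisfies x_i + r \<le> n + 3, because A_n has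
  degree 3 and indices \<le> n, L keeps the degree and raises indices by at most one, and H raises
  the degree by one without raising indices; hence a_{n,k} has degree \<le> k + 2.
  Moreover (-1)^deg times the coefficient is never negative in R_{n+1}, since H raises the degree
  by one and carries the factor -1/2, so no cancellation ever occurs. Therefore a single
  derivation suffices for the lower bound: A_{c} contains T_2 T_c^2 and the term l = 1 of H applied
  to a factor T_c produces T_2 T_c, so T_c^2 T_2^{k+1} occurs in R_{c+k+1} and
  T_c T_2^{k+1} occurs in a_{c+k,k}.\<close>

definition index_degree_le :: "nat \<Rightarrow> tpoly \<Rightarrow> bool" where
  "index_degree_le d p \<longleftrightarrow> (\<forall>m\<in>Poly_Mapping.keys p. \<forall>x\<in>#m. x + size m \<le> d)"

lemma size_sorted_list_of_multiset [simp]: "length (sorted_list_of_multiset m) = size m"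
  by (metis mset_sorted_list_of_multiset size_mset)

lemma in_keys_lin_ext:
  assumes "m \<in> Poly_Mapping.keys (lin_ext f p)"
  obtains m' where "m' \<in> Poly_Mapping.keys p"
    "m \<in> Poly_Mapping.keys (f (Poly_Mapping.lookup p m') (sorted_list_of_multiset m'))"
  using subsetD[OF keys_sum assms[unfolded lin_ext_def]] by blast

lemma in_keys_sum_single:
  assumes "m \<in> Poly_Mapping.keys (\<Sum>i\<in>I. \<Sum>j\<in>J i. Poly_Mapping.single (g i j) (c i j))"
  obtains i j where "i \<in> I" "j \<in> J i" "m = g i j"
proof -
  from set_mp[OF keys_sum assms] obtain i where "i \<in> I"
    "m \<in> Poly_Mapping.keys (\<Sum>j\<in>J i. Poly_Mapping.single (g i j) (c i j))" by blast
  moreover from set_mp[OF keys_sum this(2)] obtain j where "j \<in> J i" "m = g i j"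
    by (auto split: if_splits)
  ultimately show ?thesis using that by blast
qed

lemma keys_L_mon:
  assumes "m \<in> Poly_Mapping.keys (L_mon c xs)"
  shows "size m = length xs \<and> (\<forall>x\<in>#m. \<exists>y\<in>set xs. x \<le> y + 1)"
proof -
  obtain i j where ij: "i < j" "j < length xs" and m: "m = mset (xs[i := xs!i + 1, j := xs!j + 1])"
    using assms unfolding L_mon_def by (elim in_keys_sum_single) auto
  have "set (xs[i := xs!i + 1, j := xs!j + 1]) \<subseteq> insert (xs!j + 1) (insert (xs!i + 1) (set xs))"
    by (meson dual_order.trans insert_mono set_update_subset_insert)
  moreover have "xs!i \<in> set xs" "xs!j \<in> set xs" using ij by auto
  ultimately show ?thesis unfolding m by (auto intro: le_SucI)
qed

lemma keys_H_mon:
  assumes "m \<in> Poly_Mapping.keys (H_mon c xs)"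
  shows "size m = Suc (length xs) \<and> (\<forall>x\<in>#m. \<exists>y\<in>set xs. x \<le> y)"
proof -
  obtain k l where k: "k \<in> {..<length xs}" and l: "l \<in> {1..<xs!k}"
    and m: "m = mset xs - {#xs!k#} + {#1 + l, 1 + xs!k - l#}"
    using assms unfolding H_mon_def by (rule in_keys_sum_single)
  have xk: "xs!k \<in># mset xs" using k by simp
  then have "size m = Suc (length xs)"
    unfolding m using k by (simp add: size_Diff_singleton)
  moreover have "\<exists>y\<in>set xs. x \<le> y" if "x \<in># m" for x
  proof -
    have "x \<in># mset xs - {#xs!k#} \<or> x = 1 + l \<or> x = 1 + xs!k - l"
      using that unfolding m by auto
    then have "x \<in> set xs \<or> x \<le> xs!k" using l by (auto dest: in_diffD)
    then show ?thesis using xk by auto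
  qed
  ultimately show ?thesis by blast
qed

lemma index_degree_le_add:
  assumes "index_degree_le d p" "index_degree_le d q" shows "index_degree_le d (p + q)"
  unfolding index_degree_le_def
proof
  fix m assume "m \<in> Poly_Mapping.keys (p + q)"
  then have "m \<in> Poly_Mapping.keys p \<union> Poly_Mapping.keys q" by (rule subsetD[OF keys_add])
  then show "\<forall>x\<in>#m. x + size m \<le> d" using assms unfolding index_degree_le_def by blast
qed

lemma index_degree_le_A_pol: "index_degree_le (n + 3) (A_pol n)"
  unfolding index_degree_le_def A_pol_def
  by (auto elim!: in_keys_sum_single[where J = "\<lambda>_. {()}", simplified])

lemma index_degree_le_Lop:
  assumes "index_degree_le d p" shows "index_degree_le (Suc d) (Lop p)"
  unfolding index_degree_le_def
proof (intro ballI)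
  fix m x assume m: "m \<in> Poly_Mapping.keys (Lop p)" and "x \<in># m"
  from m obtain m' where m': "m' \<in> Poly_Mapping.keys p"
    "m \<in> Poly_Mapping.keys (L_mon (Poly_Mapping.lookup p m') (sorted_list_of_multiset m'))"
    unfolding Lop_def by (rule in_keys_lin_ext)
  from keys_L_mon[OF m'(2)] have "size m = size m'" "\<forall>x\<in>#m. \<exists>y\<in>#m'. x \<le> y + 1" by simp_all
  with \<open>x \<in># m\<close> obtain y where "y \<in># m'" "x \<le> y + 1" "size m = size m'" by blast
  moreover have "y + size m' \<le> d" using assms m'(1) \<open>y \<in># m'\<close> unfolding index_degree_le_def by blast
  ultimately show "x + size m \<le> Suc d" by linarith
qed

lemma index_degree_le_Hop:
  assumes "index_degree_le d p" shows "index_degree_le (Suc d) (Hop p)"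
  unfolding index_degree_le_def
proof (intro ballI)
  fix m x assume m: "m \<in> Poly_Mapping.keys (Hop p)" and "x \<in># m"
  from m obtain m' where m': "m' \<in> Poly_Mapping.keys p"
    "m \<in> Poly_Mapping.keys (H_mon (Poly_Mapping.lookup p m') (sorted_list_of_multiset m'))"
    unfolding Hop_def by (rule in_keys_lin_ext)
  from keys_H_mon[OF m'(2)] have "size m = Suc (size m')" "\<forall>x\<in>#m. \<exists>y\<in>#m'. x \<le> y" by simp_all
  with \<open>x \<in># m\<close> obtain y where "y \<in># m'" "x \<le> y" "size m = Suc (size m')" by blast
  moreover have "y + size m' \<le> d" using assms m'(1) \<open>y \<in># m'\<close> unfolding index_degree_le_def by blast
  ultimately show "x + size m \<le> Suc d" by linarith
qed

lemma R_Suc: "2 \<le> n \<Longrightarrow> R (Suc n) = A_pol n + Lop (R n) + Hop (R n)"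
  by simp

lemma index_degree_le_R: "index_degree_le (n + 2) (R n)"
proof (induction n)
  case 0 then show ?case by (simp add: index_degree_le_def)
next
  case (Suc n)
  show ?case
  proof (cases "n < 2")
    case True then show ?thesis by (simp add: index_degree_le_def)
  next
    case False
    then show ?thesis
      using index_degree_le_A_pol[of n] index_degree_le_Lop[OF Suc.IH] index_degree_le_Hop[OF Suc.IH]
      by (simp add: R_Suc index_degree_le_add eval_nat_numeral)
  qed
qed

definition signed_coeff :: "tpoly \<Rightarrow> monom \<Rightarrow> rat" where
  "signed_coeff p m = (-1) ^ size m * Poly_Mapping.lookup p m"

definition sign_regular :: "tpoly \<Rightarrow> bool" where
  "sign_regular p \<longleftrightarrow> (\<forall>m. 0 \<le> signed_coeff p m)"

lemma signed_coeff_add: "signed_coeff (p + q) m = signed_coeff p m + signed_coeff q m"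
  by (simp add: signed_coeff_def lookup_add algebra_simps)

lemma signed_coeff_lin_ext:
  "signed_coeff (lin_ext f p) m =
   (\<Sum>m'\<in>Poly_Mapping.keys p. signed_coeff (f (Poly_Mapping.lookup p m') (sorted_list_of_multiset m')) m)"
  unfolding signed_coeff_def lin_ext_def lookup_sum sum_distrib_left ..

lemma signed_coeff_L_mon:
  "signed_coeff (L_mon c xs) m = (\<Sum>i<length xs. \<Sum>j\<in>{i<..<length xs}.
      if mset (xs[i := xs!i + 1, j := xs!j + 1]) = m then (-1) ^ length xs * c else 0)"
  unfolding signed_coeff_def L_mon_def lookup_sum lookup_single when_def sum_distrib_left
  by (auto intro!: sum.cong)

lemma signed_coeff_H_mon:
  "signed_coeff (H_mon c xs) m = (\<Sum>k<length xs. \<Sum>l\<in>{1..<xs!k}.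
      if mset xs - {#xs!k#} + {#1 + l, 1 + xs!k - l#} = m
      then of_nat (xs!k choose l) / 2 * ((-1) ^ length xs * c) else 0)"
proof -
  have "(-1::rat) ^ size (mset xs - {#xs!k#} + {#a, b#}) = - ((-1) ^ length xs)"
    if "k < length xs" for k a b
  proof -
    from that obtain t where "length xs = Suc t" by (cases "length xs") auto
    moreover have "xs!k \<in># mset xs" using that by simp
    ultimately show ?thesis by (simp add: size_Diff_singleton)
  qed
  then show ?thesis
    unfolding signed_coeff_def H_mon_def lookup_sum lookup_single when_def sum_distrib_left
    by (auto intro!: sum.cong)
qed

lemma signed_coeff_A_pol:
  "signed_coeff (A_pol n) m =
     (\<Sum>k\<in>{1..n-1}. if {#1 + k, 1 + n - k, n#} = m then of_nat (n choose k) else 0)"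
  unfolding signed_coeff_def A_pol_def lookup_sum lookup_single when_def sum_distrib_left
  by (auto intro!: sum.cong)

lemma signed_coeff_L_mon_nonneg: "0 \<le> (-1) ^ length xs * c \<Longrightarrow> 0 \<le> signed_coeff (L_mon c xs) m"
  unfolding signed_coeff_L_mon by (auto intro!: sum_nonneg)

lemma signed_coeff_H_mon_nonneg: "0 \<le> (-1) ^ length xs * c \<Longrightarrow> 0 \<le> signed_coeff (H_mon c xs) m"
  unfolding signed_coeff_H_mon by (auto intro!: sum_nonneg)

lemma sign_regular_add: "sign_regular p \<Longrightarrow> sign_regular q \<Longrightarrow> sign_regular (p + q)"
  by (simp add: sign_regular_def signed_coeff_add)

lemma sign_regular_A_pol: "sign_regular (A_pol n)"
  unfolding sign_regular_def signed_coeff_A_pol by (auto intro!: sum_nonneg)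

lemma sign_regular_Lop: "sign_regular p \<Longrightarrow> sign_regular (Lop p)"
  unfolding sign_regular_def Lop_def signed_coeff_lin_ext
  by (intro allI sum_nonneg signed_coeff_L_mon_nonneg) (simp add: signed_coeff_def)

lemma sign_regular_Hop: "sign_regular p \<Longrightarrow> sign_regular (Hop p)"
  unfolding sign_regular_def Hop_def signed_coeff_lin_ext
  by (intro allI sum_nonneg signed_coeff_H_mon_nonneg) (simp add: signed_coeff_def)

lemma sign_regular_R: "sign_regular (R n)"
proof (induction n)
  case 0 then show ?case by (simp add: sign_regular_def signed_coeff_def)
next
  case (Suc n)
  show ?case
  proof (cases "n < 2")
    case True then show ?thesis by (simp add: sign_regular_def signed_coeff_def)
  next
    case False
    then show ?thesis using Suc.IH
      by (simp add: R_Suc sign_regular_add sign_regular_A_pol sign_regular_Lop sign_regular_Hop)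
  qed
qed

lemma signed_coeff_Hop_ge:
  assumes p: "sign_regular p" and a: "a \<in># m" and l: "1 \<le> l" "l < a"
  shows "of_nat (a choose l) / 2 * signed_coeff p m \<le> signed_coeff (Hop p) (m - {#a#} + {#1 + l, 1 + a - l#})"
proof (cases "m \<in> Poly_Mapping.keys p")
  case False
  then have "signed_coeff p m = 0" by (simp add: signed_coeff_def in_keys_iff)
  with sign_regular_Hop[OF p] show ?thesis by (simp add: sign_regular_def)
next
  case True
  define m' where "m' = m - {#a#} + {#1 + l, 1 + a - l#}"
  define xs where "xs = sorted_list_of_multiset m"
  obtain k where k: "k < length xs" "xs!k = a"
    using a by (metis in_set_conv_nth set_sorted_list_of_multiset xs_def)
  define summand where "summand k i = (if mset xs - {#xs!k#} + {#1 + i, 1 + xs!k - i#} = m'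
      then of_nat (xs!k choose i) / 2 * ((-1) ^ length xs * Poly_Mapping.lookup p m) else 0)" for k i
  have summand_nonneg: "0 \<le> summand k i" for k i
    using p unfolding summand_def sign_regular_def signed_coeff_def xs_def by simp
  have "of_nat (a choose l) / 2 * signed_coeff p m = summand k l"
    using k by (simp add: summand_def xs_def m'_def signed_coeff_def)
  also have "\<dots> \<le> (\<Sum>i\<in>{1..<xs!k}. summand k i)"
    using k l summand_nonneg by (intro member_le_sum) auto
  also have "\<dots> \<le> (\<Sum>k<length xs. \<Sum>i\<in>{1..<xs!k}. summand k i)"
    using k summand_nonneg
    by (intro member_le_sum[where f = "\<lambda>k. \<Sum>i\<in>{1..<xs!k}. summand k i"] sum_nonneg) auto
  also have "\<dots> = signed_coeff (H_mon (Poly_Mapping.lookup p m) xs) m'"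
    unfolding signed_coeff_H_mon summand_def ..
  also have "\<dots> \<le> signed_coeff (Hop p) m'"
    unfolding Hop_def signed_coeff_lin_ext xs_def using True p
    by (intro member_le_sum signed_coeff_H_mon_nonneg) (auto simp: sign_regular_def signed_coeff_def)
  finally show ?thesis unfolding m'_def .
qed

lemma signed_coeff_A_pol_ge: "2 \<le> n \<Longrightarrow> of_nat n \<le> signed_coeff (A_pol n) {#2, n, n#}"
  unfolding signed_coeff_A_pol
  by (rule order_trans[OF _ member_le_sum[of 1]]) (auto simp: add_mset_commute intro: sum_nonneg)

lemma signed_coeff_R_Suc:
  "2 \<le> n \<Longrightarrow> signed_coeff (R (Suc n)) m =
     signed_coeff (A_pol n) m + signed_coeff (Lop (R n)) m + signed_coeff (Hop (R n)) m"
  by (simp add: R_Suc signed_coeff_add)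

lemma signed_coeff_R_pos:
  assumes "2 \<le> c"
  shows "0 < signed_coeff (R (Suc (c + j))) (add_mset c (add_mset c (replicate_mset (Suc j) 2)))"
proof (induction j)
  case 0
  have "signed_coeff (R (Suc c)) {#2, c, c#} =
      signed_coeff (A_pol c) {#2, c, c#} + signed_coeff (Lop (R c)) {#2, c, c#}
        + signed_coeff (Hop (R c)) {#2, c, c#}"
    by (rule signed_coeff_R_Suc[OF assms])
  moreover have "0 < signed_coeff (A_pol c) {#2, c, c#}"
    using signed_coeff_A_pol_ge[OF assms] assms by linarith
  moreover have "0 \<le> signed_coeff (Lop (R c)) {#2, c, c#}" "0 \<le> signed_coeff (Hop (R c)) {#2, c, c#}"
    using sign_regular_Lop sign_regular_Hop sign_regular_R unfolding sign_regular_def by blast+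
  ultimately have "0 < signed_coeff (R (Suc c)) {#2, c, c#}" by linarith
  then show ?case by (simp add: add_mset_commute del: R.simps)
next
  case (Suc j)
  let ?p = "R (Suc (c + j))"
  let ?m = "add_mset c (add_mset c (replicate_mset (Suc j) 2))"
  let ?m' = "add_mset c (add_mset c (replicate_mset (Suc (Suc j)) 2))"
  have step: "?m - {#c#} + {#1 + 1, 1 + c - 1#} = ?m'"
    using assms by (simp add: add_mset_commute)
  have "of_nat (c choose 1) / 2 * signed_coeff ?p ?m
      \<le> signed_coeff (Hop ?p) (?m - {#c#} + {#1 + 1, 1 + c - 1#})"
    by (rule signed_coeff_Hop_ge[OF sign_regular_R]) (use assms in auto)
  then have "of_nat c / 2 * signed_coeff ?p ?m \<le> signed_coeff (Hop ?p) ?m'"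
    unfolding choose_one step .
  moreover have "0 < of_nat c / 2 * signed_coeff ?p ?m"
    using Suc.IH assms by (simp del: R.simps)
  moreover have "signed_coeff (R (Suc (Suc (c + j)))) ?m' =
      signed_coeff (A_pol (Suc (c + j))) ?m' + signed_coeff (Lop ?p) ?m' + signed_coeff (Hop ?p) ?m'"
    by (rule signed_coeff_R_Suc) (use assms in simp)
  moreover have "0 \<le> signed_coeff (A_pol (Suc (c + j))) ?m'" "0 \<le> signed_coeff (Lop ?p) ?m'"
    using sign_regular_A_pol sign_regular_Lop sign_regular_R unfolding sign_regular_def by blast+
  ultimately have "0 < signed_coeff (R (Suc (Suc (c + j)))) ?m'" by linarith
  then show ?case by (simp del: R.simps)
qed

lemma in_keys_if_signed_coeff_nonzero: "signed_coeff p m \<noteq> 0 \<Longrightarrow> m \<in> Poly_Mapping.keys p"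
  by (simp add: signed_coeff_def in_keys_iff)

lemma lookup_a_coef:
  "Poly_Mapping.lookup (a_coef n k) u =
     (if \<forall>x\<in>#u. x \<le> n - k then Poly_Mapping.lookup (R (n + 1)) (add_mset (n - k) u) else 0)"
proof -
  define S where "S = {m\<in>Poly_Mapping.keys (R (n+1)). n - k \<in># m \<and> (\<forall>x\<in>#m. x \<le> n - k)}"
  have "Poly_Mapping.lookup (a_coef n k) u =
      (\<Sum>m\<in>S. if m = add_mset (n - k) u then Poly_Mapping.lookup (R (n + 1)) m else 0)"
    unfolding a_coef_def lookup_sum lookup_single when_def S_def[symmetric]
    by (intro sum.cong refl) (auto simp: S_def)
  also have "\<dots> = (if add_mset (n - k) u \<in> S then Poly_Mapping.lookup (R (n + 1)) (add_mset (n - k) u) else 0)"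
    by (simp add: S_def)
  finally show ?thesis by (auto simp: S_def in_keys_iff)
qed

lemma keys_a_coef:
  "u \<in> Poly_Mapping.keys (a_coef n k) \<longleftrightarrow>
     (\<forall>x\<in>#u. x \<le> n - k) \<and> add_mset (n - k) u \<in> Poly_Mapping.keys (R (n + 1))"
  by (simp add: in_keys_iff lookup_a_coef)

lemma size_le_if_in_keys_a_coef:
  assumes "k \<le> n" and "v \<in> Poly_Mapping.keys (a_coef n k)"
  shows "size v \<le> k + 2"
proof -
  have "add_mset (n - k) v \<in> Poly_Mapping.keys (R (n + 1))"
    using assms(2) by (simp add: keys_a_coef del: R.simps)
  moreover have "n - k \<in># add_mset (n - k) v" by simp
  ultimately have "n - k + size (add_mset (n - k) v) \<le> n + 1 + 2"
    using index_degree_le_R[of "n + 1"] unfolding index_degree_le_def by blast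
  then show ?thesis using assms(1) by simp
qed

lemma add_mset_replicate_in_keys_a_coef:
  assumes "k + 2 \<le> n"
  shows "add_mset (n - k) (replicate_mset (Suc k) 2) \<in> Poly_Mapping.keys (a_coef n k)"
proof -
  define c where "c = n - k"
  have c: "2 \<le> c" "n + 1 = Suc (c + k)" using assms unfolding c_def by auto
  have "0 < signed_coeff (R (Suc (c + k))) (add_mset c (add_mset c (replicate_mset (Suc k) 2)))"
    by (rule signed_coeff_R_pos[OF c(1)])
  then have "add_mset c (add_mset c (replicate_mset (Suc k) 2)) \<in> Poly_Mapping.keys (R (n + 1))"
    unfolding c(2) by (simp add: in_keys_if_signed_coeff_nonzero del: R.simps)
  then show ?thesis using c(1) by (simp add: keys_a_coef c_def[symmetric] del: R.simps)
qed

theorem mainTheorem12: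
  fixes n k :: nat
  assumes "n \<ge> 3" and "k \<le> n - 2"
  shows "a_coef n k \<noteq> 0 \<and> total_degree (a_coef n k) = k + 2"
proof -
  let ?u = "add_mset (n - k) (replicate_mset (Suc k) 2)"
  have u: "?u \<in> Poly_Mapping.keys (a_coef n k)"
    using assms by (intro add_mset_replicate_in_keys_a_coef) simp
  have "k + 2 \<in> size ` Poly_Mapping.keys (a_coef n k)"
    using u by (rule rev_image_eqI) simp
  moreover have "size v \<le> k + 2" if "v \<in> Poly_Mapping.keys (a_coef n k)" for v
    using assms that by (intro size_le_if_in_keys_a_coef) simp_all
  ultimately have "total_degree (a_coef n k) = k + 2"
    unfolding total_degree_def by (intro Max_eqI) auto
  with u show ?thesis by auto
qed

end
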